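(* Let $\mathscr{H}$ be a complex Hilbert space and let $N(\cdot)$ be a norm on $\mathbb{B}(\mathscr{H})$ which is an algebra norm ($N(XY)\leq N(X)N(Y)$ for all $X,Y$) and self-adjoint ($N(X^* )=N(X)$ for all $X$). Then for all $B,C\in\mathbb{B}(\mathscr{H})$, $$\frac18N(C^*C+B^*B)+\frac12\max\{w_N(B+C),w_N(B-C)\}\,|w_N(B)-w_N(C)|\leq w_{(N,e)}^2(B,C).$$
   Context: For $T\in\mathbb{B}(\mathscr{H})$: $\Re(T)=\frac12(T+T^* )$ and $w_N(T)=\sup_{\theta\in\mathbb{R}}N(\Re(e^{i\theta}T))$. For $B,C\in\mathbb{B}(\mathscr{H})$, $w_{(N,e)}(B,C)=\sup_{\lambda_1,\lambda_2\in\mathbb{C},\ |\lambda_1|^2+|\lambda_2|^2\leq 1}\sup_{\theta\in\mathbb{R}} N(\Re(e^{i\theta}(\lambda_1B+\lambda_2C)))$. *)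

theory Defs
  imports "HOL-Analysis.Analysis"
begin

text \<open>The inner product is linear in the second and conjugate-linear in the first argument.\<close>

class complex_inner = real_normed_vector +
  fixes scaleC :: "complex \<Rightarrow> 'a \<Rightarrow> 'a"  (infixr \<open>*\<^sub>C\<close> 75)
  fixes cinner :: "'a \<Rightarrow> 'a \<Rightarrow> complex"
  assumes scaleC_add_right: "a *\<^sub>C (x + y) = a *\<^sub>C x + a *\<^sub>C y"
    and scaleC_add_left: "(a + b) *\<^sub>C x = a *\<^sub>C x + b *\<^sub>C x"
    and scaleC_scaleC: "a *\<^sub>C (b *\<^sub>C x) = (a * b) *\<^sub>C x"
    and scaleC_one: "1 *\<^sub>C x = x"
    and scaleR_scaleC: "scaleR r x = complex_of_real r *\<^sub>C x"
    and cinner_commute: "cinner x y = cnj (cinner y x)"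
    and cinner_add_left: "cinner (x + y) z = cinner x z + cinner y z"
    and cinner_scaleC_left: "cinner (a *\<^sub>C x) y = cnj a * cinner x y"
    and cinner_self_real_nonneg: "Im (cinner x x) = 0 \<and> 0 \<le> Re (cinner x x)"
    and cinner_self_eq_zero: "cinner x x = 0 \<longleftrightarrow> x = 0"
    and norm_eq_sqrt_cinner: "norm x = sqrt (Re (cinner x x))"

class chilbert_space = complex_inner + complete_space

text \<open>Elements of B(H) are represented as functions H \<Rightarrow> H that are complex linear and bounded.\<close>

definition bounded_clinear :: "('a::complex_inner \<Rightarrow> 'a) \<Rightarrow> bool" where
  "bounded_clinear T \<longleftrightarrow>
     (\<forall>x y. T (x + y) = T x + T y) \<and> (\<forall>c x. T (c *\<^sub>C x) = c *\<^sub>C T x) \<and>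
     (\<exists>K. \<forall>x. norm (T x) \<le> norm x * K)"

text \<open>Hilbert space adjoint (exists and is unique for bounded operators on a Hilbert space).\<close>
definition cadjoint :: "('a::complex_inner \<Rightarrow> 'a) \<Rightarrow> ('a \<Rightarrow> 'a)" where
  "cadjoint T = (SOME S. \<forall>x y. cinner (T x) y = cinner x (S y))"

definition is_norm_BH :: "(('a::complex_inner \<Rightarrow> 'a) \<Rightarrow> real) \<Rightarrow> bool" where
  "is_norm_BH N \<longleftrightarrow>
     (\<forall>T. bounded_clinear T \<longrightarrow> 0 \<le> N T) \<and>
     (\<forall>T. bounded_clinear T \<longrightarrow> (N T = 0 \<longleftrightarrow> T = (\<lambda>_. 0))) \<and>
     (\<forall>T c. bounded_clinear T \<longrightarrow> N (\<lambda>x. c *\<^sub>C T x) = cmod c * N T) \<and>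
     (\<forall>T S. bounded_clinear T \<longrightarrow> bounded_clinear S \<longrightarrow> N (\<lambda>x. T x + S x) \<le> N T + N S)"

definition algebra_norm_BH :: "(('a::complex_inner \<Rightarrow> 'a) \<Rightarrow> real) \<Rightarrow> bool" where
  "algebra_norm_BH N \<longleftrightarrow>
     (\<forall>X Y. bounded_clinear X \<longrightarrow> bounded_clinear Y \<longrightarrow> N (X \<circ> Y) \<le> N X * N Y)"

definition selfadjoint_norm_BH :: "(('a::complex_inner \<Rightarrow> 'a) \<Rightarrow> real) \<Rightarrow> bool" where
  "selfadjoint_norm_BH N \<longleftrightarrow> (\<forall>X. bounded_clinear X \<longrightarrow> N (cadjoint X) = N X)"

definition ReOp :: "('a::complex_inner \<Rightarrow> 'a) \<Rightarrow> ('a \<Rightarrow> 'a)" where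
  "ReOp T = (\<lambda>x. (1/2) *\<^sub>C (T x + cadjoint T x))"

definition wN :: "(('a::complex_inner \<Rightarrow> 'a) \<Rightarrow> real) \<Rightarrow> ('a \<Rightarrow> 'a) \<Rightarrow> real" where
  "wN N T = (SUP \<theta>::real. N (ReOp (\<lambda>x. exp (\<i> * complex_of_real \<theta>) *\<^sub>C T x)))"

definition wNe :: "(('a::complex_inner \<Rightarrow> 'a) \<Rightarrow> real) \<Rightarrow> ('a \<Rightarrow> 'a) \<Rightarrow> ('a \<Rightarrow> 'a) \<Rightarrow> real" where
  "wNe N B C = (SUP l \<in> {(l1, l2). (cmod l1)^2 + (cmod l2)^2 \<le> 1}.
      SUP \<theta>::real. N (ReOp (\<lambda>x. exp (\<i> * complex_of_real \<theta>) *\<^sub>C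
                               (fst l *\<^sub>C B x + snd l *\<^sub>C C x))))"

end

theory Submission
  imports Defs
begin

text \<open>
  Write a = w_N(B) and b = w_N(C). Every operator splits as T = Re T + i Re(-i T), so
  N(T) \<le> 2 w_N(T); together with N(X^* X) \<le> N(X)^2 this gives N(C^* C + B^* B) \<le> 4 (a^2 + b^2).
  The triangle inequality for w_N bounds w_N(B + C) and w_N(B - C) by a + b, and
  (a^2 + b^2 + (a + b) |a - b|) / 2 = max(a, b)^2, which is at most w_(N,e)(B,C)^2 because
  the choices (\<lambda>1, \<lambda>2) = (1, 0) and (0, 1) show a, b \<le> w_(N,e)(B,C).

  All of this needs adjoints, which come from the Riesz representation theorem: a bounded
  functional f attains its norm at some x in the unit ball, because by the parallelogram law
  every maximising sequence is Cauchy, and such an x is orthogonal to the kernel of f.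
\<close>

section \<open>Complex inner product spaces\<close>

lemma scaleC_zero_left [simp]: "0 *\<^sub>C x = (0::'a::complex_inner)"
  using scaleR_scaleC[of 0 x] by simp

lemma scaleC_minus_one: "(-1) *\<^sub>C x = - (x::'a::complex_inner)"
  using scaleR_scaleC[of "-1" x] by simp

lemma cinner_add_right: "cinner x (y + z) = cinner x y + cinner (x::'a::complex_inner) z"
  by (metis cinner_commute cinner_add_left complex_cnj_add)

lemma cinner_scaleC_right: "cinner x (a *\<^sub>C y) = a * cinner (x::'a::complex_inner) y"
  by (metis cinner_commute cinner_scaleC_left complex_cnj_cnj complex_cnj_mult)

lemma cinner_self_eq_norm_sq: "cinner x x = complex_of_real ((norm (x::'a::complex_inner))\<^sup>2)"
  using cinner_self_real_nonneg[of x] norm_eq_sqrt_cinner[of x] by (simp add: complex_eq_iff)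

lemma norm_sq_eq_Re_cinner: "(norm (x::'a::complex_inner))\<^sup>2 = Re (cinner x x)"
  by (simp add: cinner_self_eq_norm_sq)

lemma norm_scaleC: "norm (a *\<^sub>C x) = cmod a * norm (x::'a::complex_inner)"
proof -
  have "complex_of_real ((norm (a *\<^sub>C x))\<^sup>2) = a * cnj a * complex_of_real ((norm x)\<^sup>2)"
    by (simp only: cinner_self_eq_norm_sq[symmetric])
      (simp add: cinner_scaleC_left cinner_scaleC_right mult_ac)
  also have "\<dots> = complex_of_real ((cmod a * norm x)\<^sup>2)"
    by (simp only: complex_norm_square[symmetric] power_mult_distrib of_real_mult)
  finally have "(norm (a *\<^sub>C x))\<^sup>2 = (cmod a * norm x)\<^sup>2"
    by (simp only: of_real_eq_iff)
  then show ?thesis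
    by (rule power2_eq_imp_eq) simp_all
qed

lemma norm_add_scaleC_sq:
  "(norm (x + t *\<^sub>C y))\<^sup>2
    = (norm x)\<^sup>2 + 2 * Re (t * cinner x y) + (cmod t * norm (y::'a::complex_inner))\<^sup>2"
proof -
  have "cinner (x + t *\<^sub>C y) (x + t *\<^sub>C y)
      = cinner x x + cinner x (t *\<^sub>C y) + cinner (t *\<^sub>C y) x + cinner (t *\<^sub>C y) (t *\<^sub>C y)"
    by (simp add: cinner_add_left cinner_add_right)
  moreover have "Re (cinner (t *\<^sub>C y) x) = Re (t * cinner x y)"
    by (subst cinner_commute) (simp add: cinner_scaleC_right)
  moreover have "Re (cinner (t *\<^sub>C y) (t *\<^sub>C y)) = (cmod t * norm y)\<^sup>2"
    by (simp add: norm_sq_eq_Re_cinner[symmetric] norm_scaleC)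
  ultimately show ?thesis
    by (simp only: norm_sq_eq_Re_cinner plus_complex.sel cinner_scaleC_right)
qed

lemma cinner_cauchy_schwarz: "cmod (cinner x y) \<le> norm x * norm (y::'a::complex_inner)"
proof (cases "y = 0")
  case True
  then show ?thesis
    using cinner_scaleC_right[of x 0 0] by simp
next
  case False
  define c where "c = cinner x y"
  define t where "t = - cnj c / complex_of_real ((norm y)\<^sup>2)"
  have "cnj c * c = complex_of_real ((cmod c)\<^sup>2)"
    by (metis complex_norm_square mult.commute)
  then have "t * c = - complex_of_real ((cmod c)\<^sup>2 / (norm y)\<^sup>2)"
    by (simp add: t_def)
  moreover have "cmod t * norm y = cmod c / norm y"
    using False by (simp add: t_def norm_divide norm_mult power2_eq_square del: of_real_power)
  ultimately have "0 \<le> (norm x)\<^sup>2 - (cmod c)\<^sup>2 / (norm y)\<^sup>2"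
    using norm_add_scaleC_sq[of x t y] zero_le_power2[of "norm (x + t *\<^sub>C y)"]
    by (simp add: c_def power_divide)
  then have "(cmod c)\<^sup>2 \<le> (norm x * norm y)\<^sup>2"
    using False by (simp add: field_simps power_mult_distrib)
  then show ?thesis
    unfolding c_def by (rule power2_le_imp_le) simp
qed

lemma bounded_linear_scaleC_right: "bounded_linear (\<lambda>x::'a::complex_inner. a *\<^sub>C x)"
proof (rule bounded_linear_intro[where K = "cmod a"])
  show "a *\<^sub>C (r *\<^sub>R x) = r *\<^sub>R (a *\<^sub>C x)" for r and x :: 'a
    by (simp add: scaleR_scaleC scaleC_scaleC mult.commute)
qed (simp_all add: scaleC_add_right norm_scaleC)

lemmas scaleC_minus_right = linear_neg[OF bounded_linear.linear[OF bounded_linear_scaleC_right]]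

lemma bounded_linear_cinner_right: "bounded_linear (cinner (x::'a::complex_inner))"
proof (rule bounded_linear_intro[where K = "norm x"])
  show "cinner x (r *\<^sub>R y) = r *\<^sub>R cinner x y" for r y
    by (simp add: scaleR_scaleC cinner_scaleC_right scaleR_conv_of_real)
  show "norm (cinner x y) \<le> norm y * norm x" for y
    using cinner_cauchy_schwarz[of x y] by (simp add: mult.commute)
qed (rule cinner_add_right)

lemmas cinner_diff_right = linear_diff[OF bounded_linear.linear[OF bounded_linear_cinner_right]]
lemmas cinner_minus_right = linear_neg[OF bounded_linear.linear[OF bounded_linear_cinner_right]]

lemma cinner_minus_left: "cinner (- x) y = - cinner (x::'a::complex_inner) y"
  using cinner_scaleC_left[of "-1" x y] by (simp add: scaleC_minus_one)

lemma cinner_ext: "(\<And>z. cinner z x = cinner z y) \<Longrightarrow> x = (y::'a::complex_inner)"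
  using cinner_diff_right[of "x - y" x y] cinner_self_eq_zero[of "x - y"] by simp

section \<open>The Riesz representation theorem\<close>

lemma Re_cnj_sgn_mult: "Re (cnj (sgn z) * z) = cmod z"
proof (cases "z = 0")
  case False
  have "cnj (sgn z) * z = complex_of_real ((cmod z)\<^sup>2 / cmod z)"
    by (simp add: sgn_eq complex_norm_square mult.commute del: of_real_power)
  then show ?thesis
    using False by (simp add: power2_eq_square)
qed simp

lemma bounded_functional_norm:
  fixes f :: "'a::complex_inner \<Rightarrow> complex"
  assumes f: "bounded_linear f" and hom: "\<And>c x. f (c *\<^sub>C x) = c * f x"
  obtains s where "0 \<le> s" and "\<And>y. cmod (f y) \<le> s * norm y"
    and "\<And>e. 0 < e \<Longrightarrow> \<exists>x. norm x \<le> 1 \<and> s - e < Re (f x)"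
proof -
  interpret f: bounded_linear f by (rule f)
  define B where "B = {x::'a. norm x \<le> 1}"
  define s where "s = (SUP x\<in>B. cmod (f x))"
  obtain K where "0 \<le> K" and K: "\<And>x. cmod (f x) \<le> norm x * K"
    using f.nonneg_bounded by blast
  have bdd: "bdd_above ((\<lambda>x. cmod (f x)) ` B)"
  proof (rule bdd_aboveI2)
    show "cmod (f x) \<le> K" if "x \<in> B" for x
      using K[of x] mult_left_le_one_le[OF \<open>0 \<le> K\<close> norm_ge_zero, of x] that
      by (simp add: B_def mult.commute)
  qed
  have "0 \<in> B" by (simp add: B_def)
  then have "0 \<le> s"
    unfolding s_def by (rule cSUP_upper2[OF bdd]) simp
  moreover have "cmod (f y) \<le> s * norm y" for y
  proof (cases "y = 0")
    case True
    then show ?thesis by simp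
  next
    case False
    have "(1 / norm y) *\<^sub>R y \<in> B"
      using False by (simp add: B_def)
    then have "cmod (f ((1 / norm y) *\<^sub>R y)) \<le> s"
      unfolding s_def by (rule cSUP_upper[OF _ bdd])
    then show ?thesis
      using False by (simp add: f.scale field_simps)
  qed
  moreover have "\<exists>x. norm x \<le> 1 \<and> s - e < Re (f x)" if "0 < e" for e
  proof -
    obtain x where "x \<in> B" and x: "s - e < cmod (f x)"
      using less_cSUP_iff[OF _ bdd, of "s - e"] \<open>0 \<in> B\<close> \<open>0 < e\<close> by (auto simp: s_def)
    define w where "w = cnj (sgn (f x))"
    have "Re (f (w *\<^sub>C x)) = cmod (f x)"
      by (simp only: hom w_def Re_cnj_sgn_mult)
    moreover have "norm (w *\<^sub>C x) \<le> 1"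
      using \<open>x \<in> B\<close> by (simp add: B_def w_def norm_scaleC norm_sgn mult_le_one)
    ultimately show ?thesis
      using x by metis
  qed
  ultimately show ?thesis
    using that by blast
qed

lemma norm_diff_sq_le_if_norm_add_ge:
  fixes u v :: "'a::complex_inner"
  assumes "norm u \<le> 1" "norm v \<le> 1" "2 - d \<le> norm (u + v)"
  shows "(norm (u - v))\<^sup>2 \<le> 4 * d"
proof -
  have parallelogram: "(norm (u + v))\<^sup>2 + (norm (u - v))\<^sup>2 = 2 * (norm u)\<^sup>2 + 2 * (norm v)\<^sup>2"
    using norm_add_scaleC_sq[of u 1 v] norm_add_scaleC_sq[of u "-1" v]
    by (simp add: scaleC_one scaleC_minus_one)
  have "(norm u)\<^sup>2 \<le> 1" "(norm v)\<^sup>2 \<le> 1"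
    using assms by (simp_all add: power_le_one)
  moreover have "norm (u + v) \<le> 2"
    using norm_triangle_ineq[of u v] assms by simp
  then have "(2 - norm (u + v)) * (2 + norm (u + v)) \<le> d * 4"
    using assms(3) by (intro mult_mono) auto
  ultimately show ?thesis
    using parallelogram by (simp add: power2_eq_square algebra_simps)
qed

lemma Cauchy_maximizing_sequence:
  fixes f :: "'a::complex_inner \<Rightarrow> complex" and X :: "nat \<Rightarrow> 'a"
  assumes f: "bounded_linear f" and "0 < s" and bound: "\<And>y. cmod (f y) \<le> s * norm y"
    and X_le: "\<And>n. norm (X n) \<le> 1"
    and X_max: "\<And>n. s - inverse (real (Suc n)) < Re (f (X n))"
  shows "Cauchy X"
proof (rule CauchyI)
  interpret f: bounded_linear f by (rule f)
  fix e :: real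
  assume "0 < e"
  then obtain M where M: "inverse (real (Suc M)) < e\<^sup>2 * s / 8"
    using reals_Archimedean[of "e\<^sup>2 * s / 8"] \<open>0 < s\<close> by auto
  define d where "d = 2 * inverse (real (Suc M)) / s"
  have "norm (X m - X n) < e" if "M \<le> m" "M \<le> n" for m n
  proof -
    have "inverse (real (Suc m)) \<le> inverse (real (Suc M))"
      "inverse (real (Suc n)) \<le> inverse (real (Suc M))"
      using that by (simp_all add: le_imp_inverse_le)
    moreover have "s * (2 - d) = 2 * s - 2 * inverse (real (Suc M))"
      using \<open>0 < s\<close> by (simp add: d_def algebra_simps)
    ultimately have "s * (2 - d) < Re (f (X m)) + Re (f (X n))"
      using X_max[of m] X_max[of n] by linarith
    also have "\<dots> = Re (f (X m + X n))"
      by (simp add: f.add)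
    also have "\<dots> \<le> s * norm (X m + X n)"
      using complex_Re_le_cmod bound order_trans by blast
    finally have "2 - d \<le> norm (X m + X n)"
      using \<open>0 < s\<close> by simp
    then have "(norm (X m - X n))\<^sup>2 \<le> 4 * d"
      by (rule norm_diff_sq_le_if_norm_add_ge[OF X_le X_le])
    also have "\<dots> = 8 * inverse (real (Suc M)) / s"
      by (simp add: d_def)
    also have "\<dots> < e\<^sup>2"
      using M \<open>0 < s\<close> by (subst pos_divide_less_eq) linarith+
    finally show ?thesis
      using \<open>0 < e\<close> by (simp add: power_less_imp_less_base)
  qed
  then show "\<exists>M. \<forall>m\<ge>M. \<forall>n\<ge>M. norm (X m - X n) < e"
    by blast
qed

lemma bounded_functional_attains_norm:
  fixes f :: "'a::chilbert_space \<Rightarrow> complex"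
  assumes f: "bounded_linear f" and hom: "\<And>c x. f (c *\<^sub>C x) = c * f x"
  obtains x s where "0 \<le> s" and "norm x \<le> 1" and "f x = complex_of_real s"
    and "\<And>y. cmod (f y) \<le> s * norm y"
proof -
  obtain s where "0 \<le> s" and bound: "\<And>y. cmod (f y) \<le> s * norm y"
    and approx: "\<And>e. 0 < e \<Longrightarrow> \<exists>x. norm x \<le> 1 \<and> s - e < Re (f x)"
    using bounded_functional_norm[OF f hom] by metis
  interpret f: bounded_linear f by (rule f)
  show ?thesis
  proof (cases "s = 0")
    case True
    then show ?thesis
      using that[of 0 0] bound by (simp add: f.zero)
  next
    case False
    with \<open>0 \<le> s\<close> have "0 < s" by simp
    have "\<exists>x. norm x \<le> 1 \<and> s - inverse (real (Suc n)) < Re (f x)" for n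
      by (rule approx) simp
    then obtain X where X_le: "\<And>n. norm (X n) \<le> 1"
      and X_max: "\<And>n. s - inverse (real (Suc n)) < Re (f (X n))"
      by metis
    have "Cauchy X"
      using f \<open>0 < s\<close> bound X_le X_max by (rule Cauchy_maximizing_sequence)
    then obtain x where X: "X \<longlonglongrightarrow> x"
      using Cauchy_convergent convergent_def by blast
    have "norm x \<le> 1"
      using tendsto_norm[OF X] X_le by (intro Lim_bounded[where M = 0]) auto
    have "s \<le> Re (f x)"
    proof (rule tendsto_le[OF trivial_limit_sequentially tendsto_Re[OF f.tendsto[OF X]]])
      show "(\<lambda>n. s - inverse (real (Suc n))) \<longlonglongrightarrow> s"
        using tendsto_diff[OF tendsto_const LIMSEQ_inverse_real_of_nat, of s] by simp
      show "\<forall>\<^sub>F n in sequentially. s - inverse (real (Suc n)) \<le> Re (f (X n))"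
        using X_max by (simp add: less_imp_le)
    qed
    moreover have "cmod (f x) \<le> s"
      using bound[of x] mult_left_le[OF \<open>norm x \<le> 1\<close> \<open>0 \<le> s\<close>] by linarith
    ultimately have "Re (f x) = s" and "Re (f x) = cmod (f x)"
      using complex_Re_le_cmod[of "f x"] by linarith+
    moreover from this(2) have "Im (f x) = 0"
      using cmod_power2[of "f x"] by simp
    ultimately have "f x = complex_of_real s"
      by (simp add: complex_eq_iff)
    with \<open>0 \<le> s\<close> \<open>norm x \<le> 1\<close> bound show ?thesis
      using that by blast
  qed
qed

lemma cinner_eq_0_if_norm_le_add_scaleC:
  fixes x y :: "'a::complex_inner"
  assumes min: "\<And>a. norm x \<le> norm (x + a *\<^sub>C y)"
  shows "cinner x y = 0"
proof (rule ccontr)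
  define c where "c = cinner x y"
  assume "cinner x y \<noteq> 0"
  then have "0 < (cmod c)\<^sup>2" by (simp add: c_def)
  define t where "t = 1 / ((norm y)\<^sup>2 + 1)"
  have "0 < (norm y)\<^sup>2 + 1"
    by (simp add: add_nonneg_pos)
  then have "0 < t" and "t * (norm y)\<^sup>2 < 1"
    by (simp_all add: t_def field_simps)
  define a where "a = - complex_of_real t * cnj c"
  have "cnj c * c = complex_of_real ((cmod c)\<^sup>2)"
    by (metis complex_norm_square mult.commute)
  then have Re_ac: "Re (a * c) = - t * (cmod c)\<^sup>2"
    by (simp add: a_def mult.assoc del: of_real_power)
  have cmod_a: "cmod a = t * cmod c"
    using \<open>0 < t\<close> by (simp add: a_def norm_mult)
  have "(norm (x + a *\<^sub>C y))\<^sup>2 = (norm x)\<^sup>2 + 2 * Re (a * c) + (cmod a * norm y)\<^sup>2"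
    unfolding c_def by (rule norm_add_scaleC_sq)
  also have "\<dots> = (norm x)\<^sup>2 + t * (cmod c)\<^sup>2 * (t * (norm y)\<^sup>2 - 2)"
    unfolding Re_ac cmod_a by (simp add: power2_eq_square algebra_simps)
  also have "\<dots> < (norm x)\<^sup>2"
    using \<open>0 < t\<close> \<open>0 < (cmod c)\<^sup>2\<close> \<open>t * (norm y)\<^sup>2 < 1\<close> by (simp add: mult_pos_neg)
  finally show False
    using min[of a] by (simp add: power_mono leD)
qed

lemma riesz_representation:
  fixes f :: "'a::chilbert_space \<Rightarrow> complex"
  assumes f: "bounded_linear f" and hom: "\<And>c x. f (c *\<^sub>C x) = c * f x"
  obtains z where "\<And>x. f x = cinner z x"
proof -
  obtain x s where "0 \<le> s" and "norm x \<le> 1" and fx: "f x = complex_of_real s"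
    and bound: "\<And>y. cmod (f y) \<le> s * norm y"
    using bounded_functional_attains_norm[OF f hom] by metis
  interpret f: bounded_linear f by (rule f)
  show ?thesis
  proof (cases "s = 0")
    case True
    show ?thesis
    proof (rule that)
      show "f v = cinner 0 v" for v
        using bound[of v] True cinner_scaleC_left[of 0 0 v] by simp
    qed
  next
    case False
    with \<open>0 \<le> s\<close> have "0 < s" by simp
    have "s \<le> s * norm x"
      using bound[of x] fx \<open>0 < s\<close> by simp
    then have "norm x = 1"
      using \<open>norm x \<le> 1\<close> \<open>0 < s\<close> by simp
    \<comment> \<open>x minimises the norm on the hyperplane f = s, hence is orthogonal to the kernel of f\<close>
    have orth: "cinner x y = 0" if "f y = 0" for y
    proof (rule cinner_eq_0_if_norm_le_add_scaleC)
      fix a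
      have "f (x + a *\<^sub>C y) = complex_of_real s"
        using fx that by (simp add: f.add hom)
      then show "norm x \<le> norm (x + a *\<^sub>C y)"
        using bound[of "x + a *\<^sub>C y"] \<open>0 < s\<close> \<open>norm x = 1\<close> by simp
    qed
    show ?thesis
    proof (rule that)
      fix v
      define y where "y = v - (f v / complex_of_real s) *\<^sub>C x"
      have "f y = 0"
        using \<open>0 < s\<close> by (simp add: y_def f.diff hom fx)
      then have "cinner x v = f v / complex_of_real s"
        using orth[of y] \<open>norm x = 1\<close>
        by (simp add: y_def cinner_diff_right cinner_scaleC_right cinner_self_eq_norm_sq)
      then show "f v = cinner (complex_of_real s *\<^sub>C x) v"
        using \<open>0 < s\<close> by (simp add: cinner_scaleC_left)
    qed
  qed
qed

section \<open>Bounded operators, adjoints and real parts\<close>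

lemma bounded_clinear_iff:
  "bounded_clinear T \<longleftrightarrow> bounded_linear T \<and> (\<forall>c x. T (c *\<^sub>C x) = c *\<^sub>C T x)"
proof
  assume T: "bounded_clinear T"
  then obtain K where "\<And>x. norm (T x) \<le> norm x * K"
    unfolding bounded_clinear_def by blast
  with T show "bounded_linear T \<and> (\<forall>c x. T (c *\<^sub>C x) = c *\<^sub>C T x)"
    unfolding bounded_clinear_def by (auto intro!: bounded_linear_intro simp: scaleR_scaleC)
next
  assume "bounded_linear T \<and> (\<forall>c x. T (c *\<^sub>C x) = c *\<^sub>C T x)"
  then show "bounded_clinear T"
    unfolding bounded_clinear_def
    using bounded_linear.bounded linear_add[OF bounded_linear.linear] by blast
qed

lemma bounded_clinear_add:
  "bounded_clinear S \<Longrightarrow> bounded_clinear T \<Longrightarrow> bounded_clinear (\<lambda>x. S x + T x)"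
  by (simp add: bounded_clinear_iff bounded_linear_add scaleC_add_right)

lemma bounded_clinear_scaleC:
  "bounded_clinear T \<Longrightarrow> bounded_clinear (\<lambda>x. a *\<^sub>C T x)"
  by (simp add: bounded_clinear_iff bounded_linear_compose[OF bounded_linear_scaleC_right]
      scaleC_scaleC mult.commute)

lemma bounded_clinear_minus: "bounded_clinear T \<Longrightarrow> bounded_clinear (\<lambda>x. - T x)"
  using bounded_clinear_scaleC[of T "-1"] by (simp add: scaleC_minus_one)

lemma bounded_clinear_comp:
  "bounded_clinear S \<Longrightarrow> bounded_clinear T \<Longrightarrow> bounded_clinear (S \<circ> T)"
  by (simp add: bounded_clinear_iff comp_def bounded_linear_compose)

lemma cadjoint_exists:
  fixes T :: "'a::chilbert_space \<Rightarrow> 'a"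
  assumes T: "bounded_clinear T"
  shows "\<exists>S. \<forall>x y. cinner (T x) y = cinner x (S y)"
proof -
  have "\<exists>z. \<forall>x. cinner (T x) y = cinner x z" for y
  proof -
    have "bounded_linear (\<lambda>x. cinner y (T x))"
      using T by (simp add: bounded_clinear_iff bounded_linear_compose[OF bounded_linear_cinner_right])
    moreover have "cinner y (T (c *\<^sub>C x)) = c * cinner y (T x)" for c x
      using T by (simp add: bounded_clinear_iff cinner_scaleC_right)
    ultimately obtain z where "\<And>x. cinner y (T x) = cinner z x"
      by (rule riesz_representation) blast
    then show ?thesis
      by (metis cinner_commute)
  qed
  then show ?thesis
    by metis
qed

lemma cinner_cadjoint:
  fixes T :: "'a::chilbert_space \<Rightarrow> 'a"
  assumes "bounded_clinear T"
  shows "cinner (T x) y = cinner x (cadjoint T y)"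
  using someI_ex[OF cadjoint_exists[OF assms]] unfolding cadjoint_def by blast

lemma cadjoint_eqI:
  fixes T :: "'a::chilbert_space \<Rightarrow> 'a"
  assumes "bounded_clinear T" and "\<And>x y. cinner (T x) y = cinner x (S y)"
  shows "cadjoint T = S"
proof
  show "cadjoint T y = S y" for y
    by (rule cinner_ext) (metis assms cinner_cadjoint)
qed

lemma bounded_clinear_cadjoint:
  fixes T :: "'a::chilbert_space \<Rightarrow> 'a"
  assumes T: "bounded_clinear T"
  shows "bounded_clinear (cadjoint T)"
  unfolding bounded_clinear_def
proof (intro conjI allI)
  show "cadjoint T (x + y) = cadjoint T x + cadjoint T y" for x y
    by (rule cinner_ext) (simp add: cinner_cadjoint[OF T, symmetric] cinner_add_right)
  show "cadjoint T (c *\<^sub>C x) = c *\<^sub>C cadjoint T x" for c x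
    by (rule cinner_ext) (simp add: cinner_cadjoint[OF T, symmetric] cinner_scaleC_right)
  obtain K where "0 \<le> K" and K: "\<And>x. norm (T x) \<le> norm x * K"
    using T bounded_linear.nonneg_bounded unfolding bounded_clinear_iff by blast
  have "norm (cadjoint T y) \<le> norm y * K" for y
  proof -
    let ?x = "cadjoint T y"
    have "(norm ?x)\<^sup>2 = Re (cinner (T ?x) y)"
      by (simp add: norm_sq_eq_Re_cinner cinner_cadjoint[OF T])
    also have "\<dots> \<le> norm (T ?x) * norm y"
      using complex_Re_le_cmod cinner_cauchy_schwarz order_trans by blast
    also have "\<dots> \<le> norm ?x * (norm y * K)"
      using mult_right_mono[OF K[of ?x] norm_ge_zero[of y]] by (simp add: mult_ac)
    finally show ?thesis
      using \<open>0 \<le> K\<close> by (cases "?x = 0") (simp_all add: power2_eq_square mult_le_cancel_left_pos)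
  qed
  then show "\<exists>K. \<forall>y. norm (cadjoint T y) \<le> norm y * K"
    by blast
qed

lemma cadjoint_add:
  fixes S T :: "'a::chilbert_space \<Rightarrow> 'a"
  assumes "bounded_clinear S" and "bounded_clinear T"
  shows "cadjoint (\<lambda>x. S x + T x) = (\<lambda>y. cadjoint S y + cadjoint T y)"
  using assms
  by (intro cadjoint_eqI bounded_clinear_add)
    (simp_all add: cinner_add_left cinner_add_right cinner_cadjoint)

lemma cadjoint_scaleC:
  fixes T :: "'a::chilbert_space \<Rightarrow> 'a"
  assumes "bounded_clinear T"
  shows "cadjoint (\<lambda>x. a *\<^sub>C T x) = (\<lambda>y. cnj a *\<^sub>C cadjoint T y)"
  using assms
  by (intro cadjoint_eqI bounded_clinear_scaleC)
    (simp_all add: cinner_scaleC_left cinner_scaleC_right cinner_cadjoint)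

lemma cadjoint_minus:
  fixes T :: "'a::chilbert_space \<Rightarrow> 'a"
  assumes "bounded_clinear T"
  shows "cadjoint (\<lambda>x. - T x) = (\<lambda>y. - cadjoint T y)"
  using assms
  by (intro cadjoint_eqI bounded_clinear_minus)
    (simp_all add: cinner_minus_left cinner_minus_right cinner_cadjoint)

lemma bounded_clinear_ReOp:
  fixes T :: "'a::chilbert_space \<Rightarrow> 'a"
  assumes "bounded_clinear T"
  shows "bounded_clinear (ReOp T)"
  using assms unfolding ReOp_def by (intro bounded_clinear_scaleC bounded_clinear_add bounded_clinear_cadjoint)

lemma ReOp_add:
  fixes S T :: "'a::chilbert_space \<Rightarrow> 'a"
  assumes "bounded_clinear S" and "bounded_clinear T"
  shows "ReOp (\<lambda>x. S x + T x) = (\<lambda>x. ReOp S x + ReOp T x)"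
  using assms by (simp add: ReOp_def cadjoint_add scaleC_add_right add_ac)

lemma ReOp_minus:
  fixes T :: "'a::chilbert_space \<Rightarrow> 'a"
  assumes "bounded_clinear T"
  shows "ReOp (\<lambda>x. - T x) = (\<lambda>x. - ReOp T x)"
  using assms by (simp add: ReOp_def cadjoint_minus scaleC_minus_right[symmetric])

lemma ReOp_cartesian_decomposition:
  fixes T :: "'a::chilbert_space \<Rightarrow> 'a"
  assumes T: "bounded_clinear T"
  shows "ReOp T x + \<i> *\<^sub>C ReOp (\<lambda>x. (- \<i>) *\<^sub>C T x) x = T x"
proof -
  have Re_T: "ReOp T x = (1/2) *\<^sub>C T x + (1/2) *\<^sub>C cadjoint T x"
    by (simp add: ReOp_def scaleC_add_right)
  have i_Re_iT: "\<i> *\<^sub>C ReOp (\<lambda>x. (- \<i>) *\<^sub>C T x) x = (1/2) *\<^sub>C T x + (- 1/2) *\<^sub>C cadjoint T x"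
    by (simp add: ReOp_def cadjoint_scaleC[OF T] scaleC_add_right scaleC_scaleC)
  have "ReOp T x + \<i> *\<^sub>C ReOp (\<lambda>x. (- \<i>) *\<^sub>C T x) x
      = ((1/2) + (1/2)) *\<^sub>C T x + ((1/2) + (- 1/2)) *\<^sub>C cadjoint T x"
    unfolding Re_T i_Re_iT scaleC_add_left by (simp only: add_ac)
  then show ?thesis
    by (simp add: scaleC_one)
qed

section \<open>Norms on B(H) and the generalized numerical radius\<close>

context
  fixes N :: "('a::chilbert_space \<Rightarrow> 'a) \<Rightarrow> real"
  assumes N: "is_norm_BH N"
begin

lemma N_nonneg: "bounded_clinear T \<Longrightarrow> 0 \<le> N T"
  using N unfolding is_norm_BH_def by blast

lemma N_scaleC: "bounded_clinear T \<Longrightarrow> N (\<lambda>x. c *\<^sub>C T x) = cmod c * N T"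
  using N unfolding is_norm_BH_def by blast

lemma N_add_le:
  "bounded_clinear S \<Longrightarrow> bounded_clinear T \<Longrightarrow> N (\<lambda>x. S x + T x) \<le> N S + N T"
  using N unfolding is_norm_BH_def by blast

lemma N_minus: "bounded_clinear T \<Longrightarrow> N (\<lambda>x. - T x) = N T"
  using N_scaleC[of T "-1"] by (simp add: scaleC_minus_one)

context
  assumes selfadjoint: "selfadjoint_norm_BH N"
begin

lemma N_cadjoint: "bounded_clinear T \<Longrightarrow> N (cadjoint T) = N T"
  using selfadjoint unfolding selfadjoint_norm_BH_def by blast

lemma N_ReOp_le:
  assumes T: "bounded_clinear T"
  shows "N (ReOp T) \<le> N T"
proof -
  have "N (ReOp T) = (1/2) * N (\<lambda>x. T x + cadjoint T x)"
    unfolding ReOp_def using N_scaleC[OF bounded_clinear_add[OF T bounded_clinear_cadjoint[OF T]]]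
    by simp
  also have "\<dots> \<le> (1/2) * (N T + N (cadjoint T))"
    using N_add_le[OF T bounded_clinear_cadjoint[OF T]] by simp
  finally show ?thesis
    by (simp add: N_cadjoint[OF T])
qed

lemma N_ReOp_rotate_le:
  assumes T: "bounded_clinear T"
  shows "N (ReOp (\<lambda>x. exp (\<i> * complex_of_real \<theta>) *\<^sub>C T x)) \<le> N T"
proof -
  let ?u = "exp (\<i> * complex_of_real \<theta>)"
  have "N (ReOp (\<lambda>x. ?u *\<^sub>C T x)) \<le> N (\<lambda>x. ?u *\<^sub>C T x)"
    by (rule N_ReOp_le[OF bounded_clinear_scaleC[OF T]])
  also have "\<dots> = N T"
    by (simp add: N_scaleC[OF T] norm_exp_i_times)
  finally show ?thesis .
qed

lemma N_ReOp_rotate_le_wN: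
  assumes T: "bounded_clinear T"
  shows "N (ReOp (\<lambda>x. exp (\<i> * complex_of_real \<theta>) *\<^sub>C T x)) \<le> wN N T"
  unfolding wN_def
  by (rule cSUP_upper[OF UNIV_I bdd_aboveI2[OF N_ReOp_rotate_le[OF T]]])

lemma wN_le:
  assumes "\<And>\<theta>. N (ReOp (\<lambda>x. exp (\<i> * complex_of_real \<theta>) *\<^sub>C T x)) \<le> M"
  shows "wN N T \<le> M"
  unfolding wN_def using assms by (simp add: cSUP_least)

lemma wN_le_N: "bounded_clinear T \<Longrightarrow> wN N T \<le> N T"
  by (rule wN_le) (rule N_ReOp_rotate_le)

lemma wN_nonneg:
  assumes T: "bounded_clinear T"
  shows "0 \<le> wN N T"
  using N_nonneg[OF bounded_clinear_ReOp[OF bounded_clinear_scaleC[OF T]]]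
    N_ReOp_rotate_le_wN[OF T] order_trans by blast

lemma wN_add_le:
  assumes S: "bounded_clinear S" and T: "bounded_clinear T"
  shows "wN N (\<lambda>x. S x + T x) \<le> wN N S + wN N T"
proof (rule wN_le)
  fix \<theta>
  let ?u = "exp (\<i> * complex_of_real \<theta>)"
  have "N (ReOp (\<lambda>x. ?u *\<^sub>C (S x + T x)))
      = N (\<lambda>x. ReOp (\<lambda>x. ?u *\<^sub>C S x) x + ReOp (\<lambda>x. ?u *\<^sub>C T x) x)"
    by (simp add: scaleC_add_right ReOp_add[OF bounded_clinear_scaleC[OF S] bounded_clinear_scaleC[OF T]])
  also have "\<dots> \<le> N (ReOp (\<lambda>x. ?u *\<^sub>C S x)) + N (ReOp (\<lambda>x. ?u *\<^sub>C T x))"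
    by (intro N_add_le bounded_clinear_ReOp bounded_clinear_scaleC S T)
  also have "\<dots> \<le> wN N S + wN N T"
    by (intro add_mono N_ReOp_rotate_le_wN S T)
  finally show "N (ReOp (\<lambda>x. ?u *\<^sub>C (S x + T x))) \<le> wN N S + wN N T" .
qed

lemma wN_minus_le:
  assumes T: "bounded_clinear T"
  shows "wN N (\<lambda>x. - T x) \<le> wN N T"
proof (rule wN_le)
  fix \<theta>
  let ?u = "exp (\<i> * complex_of_real \<theta>)"
  have "N (ReOp (\<lambda>x. ?u *\<^sub>C - T x)) = N (\<lambda>x. - ReOp (\<lambda>x. ?u *\<^sub>C T x) x)"
    by (simp add: scaleC_minus_right ReOp_minus[OF bounded_clinear_scaleC[OF T]])
  also have "\<dots> \<le> wN N T"
    by (simp add: N_minus bounded_clinear_ReOp bounded_clinear_scaleC T N_ReOp_rotate_le_wN)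
  finally show "N (ReOp (\<lambda>x. ?u *\<^sub>C - T x)) \<le> wN N T" .
qed

lemma wN_diff_le:
  assumes S: "bounded_clinear S" and T: "bounded_clinear T"
  shows "wN N (\<lambda>x. S x - T x) \<le> wN N S + wN N T"
  using wN_add_le[OF S bounded_clinear_minus[OF T]] wN_minus_le[OF T] by simp

lemma N_le_2_wN:
  assumes T: "bounded_clinear T"
  shows "N T \<le> 2 * wN N T"
proof -
  let ?R = "ReOp (\<lambda>x. (- \<i>) *\<^sub>C T x)"
  have R: "bounded_clinear ?R"
    by (intro bounded_clinear_ReOp bounded_clinear_scaleC T)
  have "exp (\<i> * complex_of_real (- pi / 2)) = - \<i>"
    by (simp only: cis_conv_exp[symmetric]) (simp add: complex_eq_iff)
  then have "N ?R \<le> wN N T"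
    using N_ReOp_rotate_le_wN[OF T, of "- pi / 2"] by simp
  moreover have "N (ReOp T) \<le> wN N T"
    using N_ReOp_rotate_le_wN[OF T, of 0] by (simp add: scaleC_one)
  moreover have "N T \<le> N (ReOp T) + N (\<lambda>x. \<i> *\<^sub>C ?R x)"
    using N_add_le[OF bounded_clinear_ReOp[OF T] bounded_clinear_scaleC[OF R, of \<i>]]
    by (simp add: ReOp_cartesian_decomposition[OF T])
  ultimately show ?thesis
    by (simp add: N_scaleC[OF R])
qed

lemma wN_le_wNe:
  assumes B: "bounded_clinear B" and C: "bounded_clinear C"
  shows "wN N B \<le> wNe N B C" and "wN N C \<le> wNe N B C"
proof -
  define D :: "(complex \<times> complex) set" where "D = {(l1, l2). (cmod l1)\<^sup>2 + (cmod l2)\<^sup>2 \<le> 1}"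
  have wNe_eq: "wNe N B C = (SUP l\<in>D. wN N (\<lambda>x. fst l *\<^sub>C B x + snd l *\<^sub>C C x))"
    unfolding wNe_def wN_def D_def ..
  have "wN N (\<lambda>x. l1 *\<^sub>C B x + l2 *\<^sub>C C x) \<le> N B + N C" if "(l1, l2) \<in> D" for l1 l2
  proof -
    have "(cmod l1)\<^sup>2 + (cmod l2)\<^sup>2 \<le> 1"
      using that by (simp add: D_def)
    then have "(cmod l1)\<^sup>2 \<le> 1" "(cmod l2)\<^sup>2 \<le> 1"
      using zero_le_power2[of "cmod l1"] zero_le_power2[of "cmod l2"] by linarith+
    then have "cmod l1 \<le> 1" "cmod l2 \<le> 1"
      by (simp_all add: abs_square_le_1)
    have "wN N (\<lambda>x. l1 *\<^sub>C B x + l2 *\<^sub>C C x) \<le> N (\<lambda>x. l1 *\<^sub>C B x + l2 *\<^sub>C C x)"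
      by (intro wN_le_N bounded_clinear_add bounded_clinear_scaleC B C)
    also have "\<dots> \<le> cmod l1 * N B + cmod l2 * N C"
      using N_add_le[OF bounded_clinear_scaleC[OF B] bounded_clinear_scaleC[OF C]]
      by (simp add: N_scaleC B C)
    also have "\<dots> \<le> N B + N C"
      using \<open>cmod l1 \<le> 1\<close> \<open>cmod l2 \<le> 1\<close> N_nonneg[OF B] N_nonneg[OF C]
      by (intro add_mono mult_left_le_one_le) auto
    finally show ?thesis .
  qed
  then have bdd: "bdd_above ((\<lambda>l. wN N (\<lambda>x. fst l *\<^sub>C B x + snd l *\<^sub>C C x)) ` D)"
    by (intro bdd_aboveI2[where M = "N B + N C"]) auto
  have "(1, 0) \<in> D" and "(0, 1) \<in> D"
    by (simp_all add: D_def)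
  from cSUP_upper[OF this(1) bdd] cSUP_upper[OF this(2) bdd]
  show "wN N B \<le> wNe N B C" and "wN N C \<le> wNe N B C"
    unfolding wNe_eq by (simp_all add: scaleC_one)
qed

lemma N_cadjoint_comp_le:
  assumes "algebra_norm_BH N" and T: "bounded_clinear T"
  shows "N (\<lambda>x. cadjoint T (T x)) \<le> (N T)\<^sup>2"
proof -
  have "N (cadjoint T \<circ> T) \<le> N (cadjoint T) * N T"
    using assms bounded_clinear_cadjoint[OF T] unfolding algebra_norm_BH_def by blast
  then show ?thesis
    by (simp add: comp_def N_cadjoint[OF T] power2_eq_square)
qed

lemma N_cadjoint_sum_le:
  assumes "algebra_norm_BH N" and B: "bounded_clinear B" and C: "bounded_clinear C"
  shows "N (\<lambda>x. cadjoint C (C x) + cadjoint B (B x)) \<le> (N C)\<^sup>2 + (N B)\<^sup>2"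
  using N_add_le[OF bounded_clinear_comp[OF bounded_clinear_cadjoint[OF C] C]
      bounded_clinear_comp[OF bounded_clinear_cadjoint[OF B] B]]
    N_cadjoint_comp_le[OF assms(1) B] N_cadjoint_comp_le[OF assms(1) C]
  by (simp add: comp_def)

end

end

lemma max_sq_bound:
  fixes a b m x w :: real
  assumes "0 \<le> a" "0 \<le> b" "a \<le> w" "b \<le> w" "x \<le> 4 * (a\<^sup>2 + b\<^sup>2)" "m \<le> a + b"
  shows "(1/8) * x + (1/2) * m * \<bar>a - b\<bar> \<le> w\<^sup>2"
proof -
  have "m * \<bar>a - b\<bar> \<le> (a + b) * \<bar>a - b\<bar>"
    using assms(6) by (rule mult_right_mono) simp
  moreover have "a\<^sup>2 + b\<^sup>2 + (a + b) * \<bar>a - b\<bar> = 2 * (max a b)\<^sup>2"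
    by (cases "a \<le> b") (simp_all add: power2_eq_square algebra_simps max_def)
  moreover have "(max a b)\<^sup>2 \<le> w\<^sup>2"
    using assms(1-4) by (simp add: power_mono)
  ultimately show ?thesis
    using assms(5) by (simp only: mult.assoc) argo
qed

theorem corollary2p18:
  fixes N :: "('a::chilbert_space \<Rightarrow> 'a) \<Rightarrow> real" and B C :: "'a \<Rightarrow> 'a"
  assumes "is_norm_BH N" and "algebra_norm_BH N" and "selfadjoint_norm_BH N"
    and "bounded_clinear B" and "bounded_clinear C"
  shows "(1/8) * N (\<lambda>x. cadjoint C (C x) + cadjoint B (B x))
          + (1/2) * max (wN N (\<lambda>x. B x + C x)) (wN N (\<lambda>x. B x - C x)) * \<bar>wN N B - wN N C\<bar>
         \<le> (wNe N B C)^2"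
proof -
  note norm = assms(1) and norm_sa = assms(1,3) and B = assms(4) and C = assms(5)
  let ?a = "wN N B" and ?b = "wN N C"
  have "N (\<lambda>x. cadjoint C (C x) + cadjoint B (B x)) \<le> (N C)\<^sup>2 + (N B)\<^sup>2"
    by (rule N_cadjoint_sum_le[OF norm_sa assms(2) B C])
  also have "\<dots> \<le> (2 * ?b)\<^sup>2 + (2 * ?a)\<^sup>2"
    using N_le_2_wN[OF norm_sa B] N_le_2_wN[OF norm_sa C] N_nonneg[OF norm B] N_nonneg[OF norm C]
    by (intro add_mono power_mono) auto
  finally have adjoint_sum: "N (\<lambda>x. cadjoint C (C x) + cadjoint B (B x)) \<le> 4 * (?a\<^sup>2 + ?b\<^sup>2)"
    by (simp add: power_mult_distrib)
  have max_wN: "max (wN N (\<lambda>x. B x + C x)) (wN N (\<lambda>x. B x - C x)) \<le> ?a + ?b"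
    using wN_add_le[OF norm_sa B C] wN_diff_le[OF norm_sa B C] by simp
  show ?thesis
    by (rule max_sq_bound[OF wN_nonneg[OF norm_sa B] wN_nonneg[OF norm_sa C] wN_le_wNe[OF norm_sa B C]
          adjoint_sum max_wN])
qed

end
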